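(* Let $G$ be a finite simple directed graph. The edge set of $\mathcal TG$ can be partitioned into edge-disjoint simple cycles of $\mathcal TG$, each of which is mapped by $p$ bijectively onto a simple cycle of $G$. Moreover, if $C$ is a simple cycle of $G$ with vertex set $W$, the number of cycles of this partition lying above $C$ (i.e. mapped by $p$ onto $C$) equals the number of forests of $G$ rooted in $W$.
   Context: A spanning tree of a directed graph $G=(V,E)$ is a subgraph on all vertices with no cycle, one vertex (root) of outdegree $0$ and all others of outdegree $1$. For $W\subseteq V$ nonempty, a forest rooted in $W$ is a subgraph on all vertices, with no cycle, in which vertices of $W$ have outdegree $0$ and all others outdegree $1$. The tree graph $\mathcal TG$ has the spanning trees of $G$ as vertices; for a tree $\mathbf a$ rooted at $r$ and an edge $e$ with source $r$, let $\mathbf b$ be obtained by adding $e$ to $\mathbf a$ and deleting the edge of $\mathbf a$ going out of the target $t(e)$; then $\mathbf a\to\mathbf b$ is an edge of $\mathcal TG$. The projection $p$ maps each spanning tree to its root and each edge $\mathbf a\to\mathbf b$ of $\mathcal TG$ to the edge $e$ of $G$ used to construct it. A simple cycle is a closed path traversing each of its vertices and edges exactly once. *)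

theory Defs
  imports Main
begin

text \<open>A finite simple directed graph: finite vertex set V, edge relation E on V, no loops
  (multiple edges are impossible since E is a set of ordered pairs). An edge (u,v) has source u
  and target v.\<close>
definition simple_digraph :: "'a set \<Rightarrow> ('a \<times> 'a) set \<Rightarrow> bool" where
  "simple_digraph V E \<longleftrightarrow> finite V \<and> E \<subseteq> V \<times> V \<and> (\<forall>v. (v, v) \<notin> E)"

definition rooted_forest :: "'a set \<Rightarrow> ('a \<times> 'a) set \<Rightarrow> 'a set \<Rightarrow> ('a \<times> 'a) set \<Rightarrow> bool" where
  "rooted_forest V E W F \<longleftrightarrow> W \<noteq> {} \<and> W \<subseteq> V \<and> F \<subseteq> E \<and> acyclic F \<and>
     (\<forall>v\<in>V. card {e\<in>F. fst e = v} = (if v \<in> W then 0 else 1))"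

definition spanning_tree :: "'a set \<Rightarrow> ('a \<times> 'a) set \<Rightarrow> 'a \<Rightarrow> ('a \<times> 'a) set \<Rightarrow> bool" where
  "spanning_tree V E r T \<longleftrightarrow> r \<in> V \<and> rooted_forest V E {r} T"

text \<open>Edges of the tree graph TG, represented as triples (a, e, b): source tree a, the edge e of G
  used to construct it, target tree b.\<close>
definition tree_graph_edges ::
  "'a set \<Rightarrow> ('a \<times> 'a) set \<Rightarrow> (('a \<times> 'a) set \<times> ('a \<times> 'a) \<times> ('a \<times> 'a) set) set" where
  "tree_graph_edges V E = {(a, e, b). \<exists>r. spanning_tree V E r a \<and> e \<in> E \<and> fst e = r \<and>
      b = insert e (a - {d \<in> a. fst d = snd e})}"

abbreviation tg_src :: "('v \<times> 'e \<times> 'v) \<Rightarrow> 'v" where "tg_src x \<equiv> fst x"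
abbreviation tg_tgt :: "('v \<times> 'e \<times> 'v) \<Rightarrow> 'v" where "tg_tgt x \<equiv> snd (snd x)"

definition proj :: "('v \<times> 'e \<times> 'v) \<Rightarrow> 'e" where "proj x = fst (snd x)"

definition simple_cycle :: "('e \<Rightarrow> 'v) \<Rightarrow> ('e \<Rightarrow> 'v) \<Rightarrow> 'e set \<Rightarrow> 'e set \<Rightarrow> bool" where
  "simple_cycle src tgt Es C \<longleftrightarrow> (\<exists>es. es \<noteq> [] \<and> set es = C \<and> C \<subseteq> Es \<and>
      distinct es \<and> distinct (map src es) \<and>
      (\<forall>i<length es. tgt (es ! i) = src (es ! ((i + 1) mod length es))))"

end

theory Submission
  imports Defs
begin

text \<open>Let C be a simple cycle of G with vertex set W, F a forest rooted in W and e an edge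
  of C. Then F \<union> C - {e} is a spanning tree rooted at the source of e, and the edge of the tree
  graph that adds e to it removes exactly the edge e' of C following e, leading to
  F \<union> C - {e'}. Going once around C therefore yields a simple cycle of the tree graph lying
  above C. Conversely, every edge (a, e, b) of the tree graph lies on exactly one of these cycles:
  C consists of e together with the path in a from the target of e back to the root, and F is a
  with this path removed. Thus the cycles above C correspond bijectively to the forests rooted
  in W.\<close>

definition closed_walk :: "('e \<Rightarrow> 'v) \<Rightarrow> ('e \<Rightarrow> 'v) \<Rightarrow> 'e list \<Rightarrow> bool" where
  "closed_walk src tgt es \<longleftrightarrow>
     es \<noteq> [] \<and> successively (\<lambda>x y. tgt x = src y) es \<and> tgt (last es) = src (hd es)"

lemma closed_walk_iff_nth:
  "closed_walk src tgt es \<longleftrightarrow>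
     es \<noteq> [] \<and> (\<forall>i<length es. tgt (es ! i) = src (es ! ((i + 1) mod length es)))"
proof (cases "es = []")
  case False
  let ?n = "length es"
  have split_last: "(\<forall>i<?n. P i) \<longleftrightarrow> (\<forall>i. Suc i < ?n \<longrightarrow> P i) \<and> P (?n - 1)" for P
  proof
    assume "\<forall>i<?n. P i"
    then show "(\<forall>i. Suc i < ?n \<longrightarrow> P i) \<and> P (?n - 1)" using False by auto
  next
    assume *: "(\<forall>i. Suc i < ?n \<longrightarrow> P i) \<and> P (?n - 1)"
    show "\<forall>i<?n. P i"
    proof (intro allI impI)
      fix i assume "i < ?n"
      then have "Suc i < ?n \<or> i = ?n - 1" by linarith
      then show "P i" using * by auto
    qed
  qed
  have "(\<forall>i<?n. tgt (es ! i) = src (es ! ((i + 1) mod ?n))) \<longleftrightarrow>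
        successively (\<lambda>x y. tgt x = src y) es \<and> tgt (last es) = src (hd es)"
    unfolding split_last successively_conv_nth
    using False by (simp add: last_conv_nth hd_conv_nth)
  then show ?thesis using False by (simp add: closed_walk_def)
qed (simp add: closed_walk_def)

lemma simple_cycle_iff_closed_walk:
  "simple_cycle src tgt Es C \<longleftrightarrow>
     (\<exists>es. closed_walk src tgt es \<and> set es = C \<and> C \<subseteq> Es \<and> distinct es \<and> distinct (map src es))"
  unfolding simple_cycle_def closed_walk_iff_nth by blast

lemma closed_walk_rotate1:
  assumes "closed_walk src tgt es"
  shows "closed_walk src tgt (rotate1 es)"
proof (cases es)
  case (Cons x xs)
  then show ?thesis
    using assms
    by (cases "xs = []") (simp_all add: closed_walk_def successively_append_iff successively_Cons)
qed (use assms in simp)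

lemma closed_walk_rotate: "closed_walk src tgt es \<Longrightarrow> closed_walk src tgt (rotate n es)"
  by (induction n) (simp_all add: closed_walk_rotate1)

lemma closed_walk_map:
  assumes "closed_walk src tgt es"
    and "\<And>x y. x \<in> set es \<Longrightarrow> y \<in> set es \<Longrightarrow> tgt x = src y \<Longrightarrow> tgt' (h x) = src' (h y)"
  shows "closed_walk src' tgt' (map h es)"
  using assms unfolding closed_walk_def
  by (auto simp: successively_map last_map hd_map intro: successively_mono)

abbreviation walk :: "('a \<times> 'a) list \<Rightarrow> bool" where
  "walk \<equiv> successively (\<lambda>d d'. snd d = fst d')"

lemma walk_rtrancl_hd:
  assumes "walk ps" "d \<in> set ps"
  shows "(fst (hd ps), fst d) \<in> (set ps)\<^sup>*"
  using assms
proof (induction ps)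
  case (Cons p ps)
  show ?case
  proof (cases "d = p")
    case False
    then have "d \<in> set ps" "ps \<noteq> []" "walk ps" "snd p = fst (hd ps)"
      using Cons.prems by (auto simp: successively_Cons)
    then have "(snd p, fst d) \<in> (set (p # ps))\<^sup>*"
      using Cons.IH rtrancl_mono[of "set ps" "set (p # ps)"] by auto
    with converse_rtrancl_into_rtrancl have "(fst p, fst d) \<in> (set (p # ps))\<^sup>*"
      by (metis list.set_intros(1) prod.collapse)
    then show ?thesis by simp
  qed simp
qed simp

lemma acyclic_walk:
  assumes "walk ps" "distinct (map fst ps)" "snd (last ps) \<notin> fst ` set ps"
  shows "acyclic (set ps)"
  using assms
proof (induction ps rule: rev_induct)
  case (snoc d ps)
  have "walk ps" "distinct (map fst ps)"
    using snoc.prems by (auto simp: successively_append_iff)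
  moreover have "snd (last ps) \<notin> fst ` set ps"
  proof (cases "ps = []")
    case False
    then have "snd (last ps) = fst d" using snoc.prems(1) by (simp add: successively_append_iff)
    then show ?thesis using snoc.prems(2) by simp
  qed simp
  ultimately have "acyclic (set ps)" by (rule snoc.IH)
  moreover have "(snd d, fst d) \<notin> (set ps)\<^sup>*"
  proof
    assume "(snd d, fst d) \<in> (set ps)\<^sup>*"
    then have "snd d = fst d \<or> snd d \<in> fst ` set ps"
      by (auto elim: converse_rtranclE simp: fst_eq_Domain)
    then show False using snoc.prems(3) by auto
  qed
  ultimately show ?case using acyclic_insert[of "fst d" "snd d" "set ps"] by simp
qed (simp add: acyclic_def)

lemma distinct_walk_if_acyclic:
  assumes "walk ps" "set ps \<subseteq> R" "acyclic R"
  shows "distinct (map fst ps)"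
  using assms
proof (induction ps)
  case (Cons p ps)
  have walk_ps: "walk ps" using Cons.prems(1) by (cases ps) simp_all
  have "fst p \<notin> fst ` set ps"
  proof
    assume "fst p \<in> fst ` set ps"
    then obtain d where d: "d \<in> set ps" "fst d = fst p" by auto
    then have "snd p = fst (hd ps)" using Cons.prems(1) by (cases ps) simp_all
    then have "(snd p, fst p) \<in> (set ps)\<^sup>*" using walk_rtrancl_hd[OF walk_ps d(1)] d(2) by simp
    then have returns: "(snd p, fst p) \<in> R\<^sup>*" using rtrancl_mono[of "set ps" R] Cons.prems(2) by auto
    have "(fst p, snd p) \<in> R" using Cons.prems(2) by simp
    from rtrancl_into_trancl2[OF this returns] have "(fst p, fst p) \<in> R\<^sup>+" .
    then show False using Cons.prems(3) by (simp add: acyclic_def)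
  qed
  then show ?case using Cons.IH walk_ps Cons.prems(2,3) by simp
qed simp

lemma simple_cycle_edges_iff:
  "simple_cycle fst snd E C \<longleftrightarrow>
     (\<exists>es. closed_walk fst snd es \<and> set es = C \<and> C \<subseteq> E \<and> distinct (map fst es))"
  by (auto simp: simple_cycle_iff_closed_walk distinct_map)

lemma simple_cycle_ending_in:
  assumes "simple_cycle fst snd E C" "e \<in> C"
  obtains ps where "closed_walk fst snd (ps @ [e])" "set (ps @ [e]) = C"
    "distinct (map fst (ps @ [e]))"
proof -
  obtain es where es: "closed_walk fst snd es" "set es = C" "distinct (map fst es)"
    using assms(1) by (auto simp: simple_cycle_edges_iff)
  obtain xs ys where split: "es = (xs @ [e]) @ ys"
    using split_list[of e es] es(2) assms(2) by auto
  have rot: "rotate (length (xs @ [e])) es = (ys @ xs) @ [e]"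
    unfolding split rotate_append by simp
  have "closed_walk fst snd ((ys @ xs) @ [e])"
    using closed_walk_rotate[OF es(1)] rot by metis
  moreover have "set ((ys @ xs) @ [e]) = C" using rot es(2) set_rotate by metis
  moreover have "distinct (map fst ((ys @ xs) @ [e]))"
    using rot es(3) by (metis distinct_rotate rotate_map)
  ultimately show thesis by (rule that)
qed

lemma simple_cycle_subset: "simple_cycle src tgt Es C \<Longrightarrow> C \<subseteq> Es"
  by (auto simp: simple_cycle_def)

lemma simple_cycle_nonempty: "simple_cycle src tgt Es C \<Longrightarrow> C \<noteq> {}"
  by (auto simp: simple_cycle_def)

lemma simple_cycle_inj_on_fst: "simple_cycle fst snd E C \<Longrightarrow> inj_on fst C"
  by (auto simp: simple_cycle_edges_iff distinct_map)

lemma simple_cycle_snd_in_fst: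
  assumes "simple_cycle fst snd E C" "d \<in> C"
  shows "snd d \<in> fst ` C"
proof -
  obtain ps where "closed_walk fst snd (ps @ [d])" "set (ps @ [d]) = C"
    using simple_cycle_ending_in[OF assms] .
  then have "snd d = fst (hd (ps @ [d]))" "hd (ps @ [d]) \<in> C"
    using hd_in_set[of "ps @ [d]"] by (auto simp: closed_walk_def)
  then show ?thesis by simp
qed

lemma simple_cycle_minus_edge:
  assumes "simple_cycle fst snd E C" "e \<in> C"
  shows "acyclic (C - {e})" and "\<forall>v\<in>fst ` C. (snd e, v) \<in> (C - {e})\<^sup>*"
proof -
  obtain ps where ps: "closed_walk fst snd (ps @ [e])" "set (ps @ [e]) = C"
    "distinct (map fst (ps @ [e]))"
    using simple_cycle_ending_in[OF assms] .
  have C_minus: "C - {e} = set ps" using ps(2,3) by auto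
  have walk: "walk ps" and joint: "ps \<noteq> [] \<Longrightarrow> snd (last ps) = fst e"
    and closing: "snd e = fst (hd (ps @ [e]))"
    using ps(1) by (auto simp: closed_walk_def successively_append_iff)
  have "snd (last ps) \<notin> fst ` set ps"
    using joint ps(3) by (cases "ps = []") auto
  then show "acyclic (C - {e})"
    unfolding C_minus using walk ps(3) by (intro acyclic_walk) auto
  show "\<forall>v\<in>fst ` C. (snd e, v) \<in> (C - {e})\<^sup>*"
  proof (cases "ps = []")
    case True
    then show ?thesis using ps(2) closing by auto
  next
    case False
    have "(snd e, fst d) \<in> (set ps)\<^sup>*" if "d \<in> set ps" for d
      using walk_rtrancl_hd[OF walk that] closing False by simp
    moreover have "(snd e, fst e) \<in> (set ps)\<^sup>*"
    proof (rule rtrancl_into_rtrancl)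
      show "(snd e, fst (last ps)) \<in> (set ps)\<^sup>*" using calculation False by simp
      show "(fst (last ps), fst e) \<in> set ps"
        using joint False last_in_set[of ps] by (metis prod.collapse)
    qed
    moreover have "C = insert e (set ps)" using ps(2) by simp
    ultimately have "(snd e, fst d) \<in> (set ps)\<^sup>*" if "d \<in> C" for d
      using that by (cases "d = e") blast+
    then show ?thesis unfolding C_minus by blast
  qed
qed

lemma card_fst_fiber:
  assumes "inj_on fst F"
  shows "card {d \<in> F. fst d = v} = (if v \<in> fst ` F then 1 else 0)"
proof (cases "v \<in> fst ` F")
  case True
  then obtain d where "d \<in> F" "fst d = v" by auto
  then have "{d' \<in> F. fst d' = v} = {d}" using assms by (auto dest: inj_onD)
  then show ?thesis using True by simp
next
  case False
  then have "{d \<in> F. fst d = v} = {}" by force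
  then show ?thesis by (simp only: False card.empty if_False)
qed

lemma acyclic_Un:
  assumes "finite r" "finite s" "acyclic r" "acyclic s" "Range r \<inter> Domain s = {}"
  shows "acyclic (r \<union> s)"
proof -
  have "wf (r\<inverse> \<union> s\<inverse>)"
    using assms by (intro wf_Un finite_acyclic_wf_converse) auto
  then show ?thesis by (metis acyclic_converse converse_Un wf_acyclic)
qed

definition tree_graph_edge ::
  "('a \<times> 'a) set \<Rightarrow> 'a \<times> 'a \<Rightarrow> ('a \<times> 'a) set \<times> ('a \<times> 'a) \<times> ('a \<times> 'a) set" where
  "tree_graph_edge a e = (a, e, insert e (a - {d \<in> a. fst d = snd e}))"

lemma mem_tree_graph_edges:
  "x \<in> tree_graph_edges V E \<longleftrightarrow>
     (\<exists>a e. x = tree_graph_edge a e \<and> e \<in> E \<and> spanning_tree V E (fst e) a)"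
  by (auto simp: tree_graph_edges_def tree_graph_edge_def)

definition lifted_cycle ::
  "('a \<times> 'a) set \<Rightarrow> ('a \<times> 'a) set \<Rightarrow> (('a \<times> 'a) set \<times> ('a \<times> 'a) \<times> ('a \<times> 'a) set) set" where
  "lifted_cycle F C = (\<lambda>e. tree_graph_edge (F \<union> C - {e}) e) ` C"

lemma proj_lifted_cycle: "proj ` lifted_cycle F C = C"
  by (force simp: lifted_cycle_def tree_graph_edge_def proj_def)

lemma inj_on_proj_lifted_cycle: "inj_on proj (lifted_cycle F C)"
  by (auto simp: inj_on_def lifted_cycle_def tree_graph_edge_def proj_def)

definition lifted_cycles ::
  "'a set \<Rightarrow> ('a \<times> 'a) set \<Rightarrow> (('a \<times> 'a) set \<times> ('a \<times> 'a) \<times> ('a \<times> 'a) set) set set" where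
  "lifted_cycles V E =
     {lifted_cycle F C | C F. simple_cycle fst snd E C \<and> rooted_forest V E (fst ` C) F}"

context
  fixes V :: "'a set" and E :: "('a \<times> 'a) set"
  assumes G: "simple_digraph V E"
begin

lemma finite_edges: "finite E"
  using G finite_subset[of E "V \<times> V"] by (auto simp: simple_digraph_def)

lemma edges_subset: "E \<subseteq> V \<times> V"
  using G by (simp add: simple_digraph_def)

lemma edge_not_loop: "d \<in> E \<Longrightarrow> fst d \<noteq> snd d"
  using G by (auto simp: simple_digraph_def)

lemma rooted_forest_iff:
  "rooted_forest V E W F \<longleftrightarrow>
     W \<noteq> {} \<and> W \<subseteq> V \<and> F \<subseteq> E \<and> acyclic F \<and> fst ` F = V - W \<and> inj_on fst F"
proof
  assume F: "rooted_forest V E W F"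
  then have basic: "W \<noteq> {}" "W \<subseteq> V" "F \<subseteq> E" "acyclic F"
    and deg: "\<And>v. v \<in> V \<Longrightarrow> card {d \<in> F. fst d = v} = (if v \<in> W then 0 else 1)"
    by (auto simp: rooted_forest_def)
  have fin: "finite {d \<in> F. fst d = v}" for v
    using basic(3) finite_edges by (auto intro: finite_subset)
  have fstV: "fst ` F \<subseteq> V" using basic(3) edges_subset by auto
  have no_out: "{d \<in> F. fst d = v} = {}" if "v \<in> W" for v
    using deg[of v] fin[of v] that basic(2) by auto
  have one_out: "\<exists>d. {d' \<in> F. fst d' = v} = {d}" if "v \<in> V - W" for v
    using deg[of v] that by (auto simp: card_1_singleton_iff)
  have "fst ` F = V - W"
  proof
    show "fst ` F \<subseteq> V - W" using fstV no_out by fastforce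
    show "V - W \<subseteq> fst ` F"
    proof
      fix v assume "v \<in> V - W"
      then obtain d where "{d' \<in> F. fst d' = v} = {d}" using one_out by blast
      then show "v \<in> fst ` F" by (metis (mono_tags, lifting) image_eqI insertI1 mem_Collect_eq)
    qed
  qed
  moreover have "inj_on fst F"
  proof (rule inj_onI)
    fix d d' assume "d \<in> F" "d' \<in> F" "fst d = fst d'"
    moreover obtain c where "{x \<in> F. fst x = fst d} = {c}"
      using one_out[of "fst d"] \<open>fst ` F = V - W\<close> \<open>d \<in> F\<close> by auto
    ultimately show "d = d'" by (metis (mono_tags, lifting) mem_Collect_eq singletonD)
  qed
  ultimately show "W \<noteq> {} \<and> W \<subseteq> V \<and> F \<subseteq> E \<and> acyclic F \<and> fst ` F = V - W \<and> inj_on fst F"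
    using basic by blast
next
  assume "W \<noteq> {} \<and> W \<subseteq> V \<and> F \<subseteq> E \<and> acyclic F \<and> fst ` F = V - W \<and> inj_on fst F"
  then show "rooted_forest V E W F"
    by (auto simp: rooted_forest_def card_fst_fiber)
qed

lemma spanning_tree_iff:
  "spanning_tree V E r T \<longleftrightarrow>
     r \<in> V \<and> T \<subseteq> E \<and> acyclic T \<and> fst ` T = V - {r} \<and> inj_on fst T"
  by (auto simp: spanning_tree_def rooted_forest_iff)

lemma spanning_tree_forest_cycle:
  assumes C: "simple_cycle fst snd E C" and F: "rooted_forest V E (fst ` C) F" and e: "e \<in> C"
  shows "spanning_tree V E (fst e) (F \<union> C - {e})"
proof -
  have F_props: "F \<subseteq> E" "acyclic F" "fst ` F = V - fst ` C" "inj_on fst F" "fst ` C \<subseteq> V"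
    using F by (auto simp: rooted_forest_iff)
  have C_props: "C \<subseteq> E" "inj_on fst C" "snd ` C \<subseteq> fst ` C"
    using simple_cycle_subset[OF C] simple_cycle_inj_on_fst[OF C] simple_cycle_snd_in_fst[OF C]
    by auto
  have T: "F \<union> C - {e} = (C - {e}) \<union> F"
    using e F_props(3) by force
  have "acyclic ((C - {e}) \<union> F)"
  proof (rule acyclic_Un)
    show "finite (C - {e})" "finite F"
      using C_props(1) F_props(1) finite_edges by (auto intro: finite_subset)
    show "acyclic (C - {e})" using simple_cycle_minus_edge(1)[OF C e] .
    show "Range (C - {e}) \<inter> Domain F = {}"
      using C_props(3) F_props(3) by (force simp: fst_eq_Domain[symmetric] snd_eq_Range[symmetric])
  qed (rule F_props(2))
  moreover have "fst ` (C - {e}) = fst ` C - {fst e}"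
    using inj_on_image_set_diff[OF C_props(2)] e by auto
  then have "fst ` ((C - {e}) \<union> F) = V - {fst e}"
    unfolding image_Un F_props(3) using F_props(5) e by blast
  moreover have "inj_on fst ((C - {e}) \<union> F)"
    using F_props(3,4) C_props(2) by (auto simp: inj_on_Un intro: inj_on_subset)
  ultimately show ?thesis
    unfolding T spanning_tree_iff using e F_props(1,5) C_props(1) by auto
qed

lemma tree_graph_edge_forest_cycle:
  assumes C: "simple_cycle fst snd E C" and F: "rooted_forest V E (fst ` C) F"
    and e: "e \<in> C" and e': "e' \<in> C" "fst e' = snd e"
  shows "tree_graph_edge (F \<union> C - {e}) e = (F \<union> C - {e}, e, F \<union> C - {e'})"
proof -
  let ?T = "F \<union> C - {e}"
  have "inj_on fst ?T"
    using spanning_tree_forest_cycle[OF C F e] by (simp add: spanning_tree_iff)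
  moreover have "e' \<noteq> e"
    using edge_not_loop[of e] simple_cycle_subset[OF C] e e' by auto
  moreover have "e' \<in> ?T" using e' \<open>e' \<noteq> e\<close> by simp
  ultimately have "d = e'" if "d \<in> ?T" "fst d = snd e" for d
    using inj_onD[of fst ?T d e'] that e'(2) by simp
  then have "{d \<in> ?T. fst d = snd e} = {e'}"
    using \<open>e' \<in> ?T\<close> e'(2) by blast
  moreover have "e \<notin> F"
    using F e by (auto simp: rooted_forest_iff)
  ultimately show ?thesis
    using e \<open>e' \<noteq> e\<close> by (auto simp: tree_graph_edge_def)
qed

lemma lifted_cycle_subset:
  assumes C: "simple_cycle fst snd E C" and F: "rooted_forest V E (fst ` C) F"
  shows "lifted_cycle F C \<subseteq> tree_graph_edges V E"
proof
  fix x assume "x \<in> lifted_cycle F C"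
  then obtain e where "e \<in> C" "x = tree_graph_edge (F \<union> C - {e}) e"
    by (auto simp: lifted_cycle_def)
  then show "x \<in> tree_graph_edges V E"
    unfolding mem_tree_graph_edges
    using spanning_tree_forest_cycle[OF C F \<open>e \<in> C\<close>] simple_cycle_subset[OF C]
    by (intro exI[of _ "F \<union> C - {e}"] exI[of _ e]) auto
qed

lemma simple_cycle_lifted_cycle:
  assumes C: "simple_cycle fst snd E C" and F: "rooted_forest V E (fst ` C) F"
  shows "simple_cycle tg_src tg_tgt (tree_graph_edges V E) (lifted_cycle F C)"
proof -
  obtain es where es: "closed_walk fst snd es" "set es = C" "distinct (map fst es)"
    using C by (auto simp: simple_cycle_edges_iff)
  define h where "h e = tree_graph_edge (F \<union> C - {e}) e" for e
  have "closed_walk tg_src tg_tgt (map h es)"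
  proof (rule closed_walk_map[OF es(1)])
    fix x y assume "x \<in> set es" "y \<in> set es" "snd x = fst y"
    then show "tg_tgt (h x) = tg_src (h y)"
      using tree_graph_edge_forest_cycle[OF C F, of x y] es(2)
      by (simp add: h_def tree_graph_edge_def)
  qed
  moreover have "set (map h es) = lifted_cycle F C"
    using es(2) by (simp add: lifted_cycle_def h_def)
  moreover have "distinct (map h es)" "distinct (map tg_src (map h es))"
    using es(2,3) by (auto simp: distinct_map inj_on_def h_def tree_graph_edge_def)
  ultimately show ?thesis
    using lifted_cycle_subset[OF C F] by (auto simp: simple_cycle_iff_closed_walk)
qed

lemma spanning_tree_walk_to_root:
  assumes T: "spanning_tree V E r T" and "v \<in> V" "v \<noteq> r"
  shows "\<exists>ps. ps \<noteq> [] \<and> set ps \<subseteq> T \<and> walk ps \<and> fst (hd ps) = v \<and> snd (last ps) = r"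
proof -
  have T_props: "T \<subseteq> E" "acyclic T" "fst ` T = V - {r}"
    using T by (auto simp: spanning_tree_iff)
  have "wf (T\<inverse>)"
    using T_props finite_edges by (intro finite_acyclic_wf_converse) (auto intro: finite_subset)
  then show ?thesis
    using \<open>v \<in> V\<close> \<open>v \<noteq> r\<close>
  proof (induction v rule: wf_induct_rule)
    case (less v)
    then have "v \<in> fst ` T" using T_props(3) by simp
    then obtain d where d: "d \<in> T" "fst d = v" by blast
    then have "(snd d, v) \<in> T\<inverse>" by (metis converseI prod.collapse)
    have "snd d \<in> V" using d(1) T_props(1) edges_subset by (auto simp: mem_Times_iff)
    show ?case
    proof (cases "snd d = r")
      case True
      then show ?thesis using d by (intro exI[of _ "[d]"]) auto
    next
      case False
      then obtain ps where "ps \<noteq> []" "set ps \<subseteq> T" "walk ps" "fst (hd ps) = snd d" "snd (last ps) = r"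
        using less.IH[OF \<open>(snd d, v) \<in> T\<inverse>\<close> \<open>snd d \<in> V\<close>] by blast
      then show ?thesis using d by (intro exI[of _ "d # ps"]) (auto simp: successively_Cons)
    qed
  qed
qed

lemma tree_graph_edge_in_lifted_cycle:
  assumes "x \<in> tree_graph_edges V E"
  shows "\<exists>C F. simple_cycle fst snd E C \<and> rooted_forest V E (fst ` C) F \<and> x \<in> lifted_cycle F C"
proof -
  obtain a e where x: "x = tree_graph_edge a e" and e: "e \<in> E" and a: "spanning_tree V E (fst e) a"
    using assms by (auto simp: mem_tree_graph_edges)
  have a_props: "a \<subseteq> E" "acyclic a" "fst ` a = V - {fst e}" "inj_on fst a"
    using a by (auto simp: spanning_tree_iff)
  have "snd e \<in> V" using e edges_subset by (auto simp: mem_Times_iff)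
  moreover have "snd e \<noteq> fst e" using edge_not_loop[OF e] by simp
  ultimately obtain ps where ps: "ps \<noteq> []" "set ps \<subseteq> a" "walk ps"
    "fst (hd ps) = snd e" "snd (last ps) = fst e"
    using spanning_tree_walk_to_root[OF a] by blast
  define C where "C = set (e # ps)"
  define F where "F = a - set ps"
  have "fst e \<notin> fst ` a" using a_props(3) by simp
  then have e_notin: "e \<notin> a" by blast
  have "distinct (map fst (e # ps))"
    using distinct_walk_if_acyclic[OF ps(3,2) a_props(2)] \<open>fst e \<notin> fst ` a\<close> ps(2) by auto
  moreover have "closed_walk fst snd (e # ps)"
    using ps by (simp add: closed_walk_def successively_Cons)
  moreover have "C \<subseteq> E" using e ps(2) a_props(1) by (auto simp: C_def)
  ultimately have C: "simple_cycle fst snd E C"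
    unfolding simple_cycle_edges_iff C_def by blast
  have "fst ` F = fst ` a - fst ` set ps"
    unfolding F_def using inj_on_image_set_diff[OF a_props(4) _ ps(2)] by blast
  then have "fst ` F = V - fst ` C"
    using a_props(3) by (auto simp: C_def)
  moreover have "fst ` C \<subseteq> V" using \<open>C \<subseteq> E\<close> edges_subset by (auto simp: mem_Times_iff)
  ultimately have F: "rooted_forest V E (fst ` C) F"
    unfolding rooted_forest_iff using a_props
    by (auto simp: F_def C_def intro: acyclic_subset inj_on_subset)
  have "F \<union> C - {e} = a"
    using e_notin ps(2) by (auto simp: F_def C_def)
  then have "x \<in> lifted_cycle F C"
    using x by (auto simp: lifted_cycle_def C_def)
  then show ?thesis using C F by blast
qed

lemma cycle_from_spanning_tree:
  assumes C: "simple_cycle fst snd E C" and F: "rooted_forest V E (fst ` C) F" and e: "e \<in> C"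
  defines "T \<equiv> F \<union> C - {e}"
  shows "C = insert e {d \<in> T. (snd e, fst d) \<in> T\<^sup>*}"
proof -
  have F_out: "fst d \<notin> fst ` C" if "d \<in> F" for d
    using F that by (auto simp: rooted_forest_iff)
  have reach_in_cycle: "y \<in> fst ` C" if "(snd e, y) \<in> T\<^sup>*" for y
    using that
  proof (induction rule: rtrancl_induct)
    case base
    show ?case using simple_cycle_snd_in_fst[OF C e] .
  next
    case (step y z)
    then have "(y, z) \<in> C" using F_out[of "(y, z)"] by (auto simp: T_def)
    then show ?case using simple_cycle_snd_in_fst[OF C] by force
  qed
  have "C - {e} \<subseteq> T" by (auto simp: T_def)
  then have reached: "(snd e, fst d) \<in> T\<^sup>*" if "d \<in> C" for d
    using simple_cycle_minus_edge(2)[OF C e] rtrancl_mono that by blast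
  have in_cycle: "d \<in> C" if "d \<in> T" "fst d \<in> fst ` C" for d
    using that F_out[of d] by (auto simp: T_def)
  show ?thesis
  proof (intro equalityI subsetI)
    fix d assume "d \<in> C"
    then show "d \<in> insert e {d \<in> T. (snd e, fst d) \<in> T\<^sup>*}"
      using reached[of d] by (cases "d = e") (auto simp: T_def)
  next
    fix d assume "d \<in> insert e {d \<in> T. (snd e, fst d) \<in> T\<^sup>*}"
    then show "d \<in> C" using e in_cycle reach_in_cycle by blast
  qed
qed

lemma lifted_cycles_disjoint:
  assumes C1: "simple_cycle fst snd E C1" and F1: "rooted_forest V E (fst ` C1) F1"
    and C2: "simple_cycle fst snd E C2" and F2: "rooted_forest V E (fst ` C2) F2"
    and x: "x \<in> lifted_cycle F1 C1" "x \<in> lifted_cycle F2 C2"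
  shows "C1 = C2 \<and> F1 = F2"
proof -
  obtain e1 where e1: "e1 \<in> C1" "x = tree_graph_edge (F1 \<union> C1 - {e1}) e1"
    using x(1) unfolding lifted_cycle_def by blast
  obtain e2 where e2: "e2 \<in> C2" "x = tree_graph_edge (F2 \<union> C2 - {e2}) e2"
    using x(2) unfolding lifted_cycle_def by blast
  have "tg_src x = F1 \<union> C1 - {e1}" "proj x = e1"
    using e1(2) by (simp_all add: tree_graph_edge_def proj_def)
  moreover have "tg_src x = F2 \<union> C2 - {e2}" "proj x = e2"
    using e2(2) by (simp_all add: tree_graph_edge_def proj_def)
  ultimately have "e1 = e2" and T: "F1 \<union> C1 - {e1} = F2 \<union> C2 - {e2}" by simp_all
  then have "C1 = C2"
    using cycle_from_spanning_tree[OF C1 F1 e1(1)] cycle_from_spanning_tree[OF C2 F2 e2(1)] by simp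
  moreover have "F1 \<inter> C1 = {}" "F2 \<inter> C2 = {}"
    using F1 F2 by (auto simp: rooted_forest_iff)
  then have "F1 = (F1 \<union> C1 - {e1}) - C1" "F2 = (F2 \<union> C2 - {e2}) - C2"
    using e1(1) e2(1) by blast+
  ultimately show ?thesis using T by simp
qed

lemma simple_cycle_lifted_cycles:
  assumes "Z \<in> lifted_cycles V E"
  shows "simple_cycle tg_src tg_tgt (tree_graph_edges V E) Z \<and> inj_on proj Z \<and>
    simple_cycle fst snd E (proj ` Z)"
proof -
  obtain C F where "Z = lifted_cycle F C" "simple_cycle fst snd E C" "rooted_forest V E (fst ` C) F"
    using assms by (auto simp: lifted_cycles_def)
  then show ?thesis
    by (simp add: simple_cycle_lifted_cycle inj_on_proj_lifted_cycle proj_lifted_cycle)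
qed

lemma Union_lifted_cycles: "\<Union> (lifted_cycles V E) = tree_graph_edges V E"
proof
  show "\<Union> (lifted_cycles V E) \<subseteq> tree_graph_edges V E"
    using lifted_cycle_subset unfolding lifted_cycles_def by blast
  show "tree_graph_edges V E \<subseteq> \<Union> (lifted_cycles V E)"
  proof
    fix x assume "x \<in> tree_graph_edges V E"
    then obtain C F where "simple_cycle fst snd E C" "rooted_forest V E (fst ` C) F"
      "x \<in> lifted_cycle F C"
      using tree_graph_edge_in_lifted_cycle by blast
    then show "x \<in> \<Union> (lifted_cycles V E)" unfolding lifted_cycles_def by blast
  qed
qed

lemma pairwise_disjnt_lifted_cycles: "pairwise disjnt (lifted_cycles V E)"
proof (rule pairwiseI)
  fix Z1 Z2 assume "Z1 \<in> lifted_cycles V E" "Z2 \<in> lifted_cycles V E" "Z1 \<noteq> Z2"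
  moreover obtain C1 F1 where Z1: "Z1 = lifted_cycle F1 C1"
    "simple_cycle fst snd E C1" "rooted_forest V E (fst ` C1) F1"
    using \<open>Z1 \<in> lifted_cycles V E\<close> by (auto simp: lifted_cycles_def)
  moreover obtain C2 F2 where Z2: "Z2 = lifted_cycle F2 C2"
    "simple_cycle fst snd E C2" "rooted_forest V E (fst ` C2) F2"
    using \<open>Z2 \<in> lifted_cycles V E\<close> by (auto simp: lifted_cycles_def)
  ultimately show "disjnt Z1 Z2"
    using lifted_cycles_disjoint[OF Z1(2,3) Z2(2,3)] by (auto simp: disjnt_def)
qed

lemma card_lifted_cycles_above:
  assumes C: "simple_cycle fst snd E C"
  shows "card {Z \<in> lifted_cycles V E. proj ` Z = C} = card {F. rooted_forest V E (fst ` C) F}"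
proof -
  let ?forests = "{F. rooted_forest V E (fst ` C) F}"
  have "{Z \<in> lifted_cycles V E. proj ` Z = C} = (\<lambda>F. lifted_cycle F C) ` ?forests"
  proof (intro equalityI subsetI)
    fix Z assume "Z \<in> {Z \<in> lifted_cycles V E. proj ` Z = C}"
    then obtain C' F where "Z = lifted_cycle F C'" "rooted_forest V E (fst ` C') F" "proj ` Z = C"
      by (auto simp: lifted_cycles_def)
    moreover from this have "C' = C" by (simp add: proj_lifted_cycle)
    ultimately show "Z \<in> (\<lambda>F. lifted_cycle F C) ` ?forests" by (intro image_eqI[of _ _ F]) auto
  next
    fix Z assume "Z \<in> (\<lambda>F. lifted_cycle F C) ` ?forests"
    then show "Z \<in> {Z \<in> lifted_cycles V E. proj ` Z = C}"
      using C proj_lifted_cycle unfolding lifted_cycles_def by blast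
  qed
  moreover obtain e where "e \<in> C" using simple_cycle_nonempty[OF C] by blast
  have "inj_on (\<lambda>F. lifted_cycle F C) ?forests"
  proof (rule inj_onI)
    fix F1 F2 assume "F1 \<in> ?forests" "F2 \<in> ?forests" "lifted_cycle F1 C = lifted_cycle F2 C"
    moreover have "tree_graph_edge (F1 \<union> C - {e}) e \<in> lifted_cycle F1 C"
      using \<open>e \<in> C\<close> by (simp add: lifted_cycle_def)
    ultimately show "F1 = F2" using lifted_cycles_disjoint[OF C _ C, of F1 F2] by simp
  qed
  ultimately show ?thesis by (simp add: card_image)
qed

end

theorem mainTheorem4:
  fixes V :: "'a set" and E :: "('a \<times> 'a) set"
  assumes "simple_digraph V E"
  shows "\<exists>P. \<Union>P = tree_graph_edges V E \<and> pairwise disjnt P \<and>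
     (\<forall>Z\<in>P. simple_cycle tg_src tg_tgt (tree_graph_edges V E) Z \<and> inj_on proj Z \<and>
              simple_cycle fst snd E (proj ` Z)) \<and>
     (\<forall>C. simple_cycle fst snd E C \<longrightarrow>
          card {Z\<in>P. proj ` Z = C} = card {F. rooted_forest V E (fst ` C) F})"
proof (intro exI[of _ "lifted_cycles V E"] conjI ballI allI impI)
  show "\<Union> (lifted_cycles V E) = tree_graph_edges V E"
    by (rule Union_lifted_cycles[OF assms])
  show "pairwise disjnt (lifted_cycles V E)"
    by (rule pairwise_disjnt_lifted_cycles[OF assms])
  show "card {Z \<in> lifted_cycles V E. proj ` Z = C} = card {F. rooted_forest V E (fst ` C) F}"
    if "simple_cycle fst snd E C" for C
    using card_lifted_cycles_above[OF assms that] .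
  fix Z assume "Z \<in> lifted_cycles V E"
  with simple_cycle_lifted_cycles[OF assms]
  show "simple_cycle tg_src tg_tgt (tree_graph_edges V E) Z" "inj_on proj Z"
    "simple_cycle fst snd E (proj ` Z)" by blast+
qed

end
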